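(* Let $\Bbbk$ be a field, $H$ a Hopf $\Bbbk$-algebra with bijective antipode, and $A$ a left $H$-module $\Bbbk$-algebra. If $A$ is $H$-prime, then the extended $H$-center $\mathcal{C}^H A$ is a field. Conversely, if $A$ is semiprime and $\mathcal{C}^H A$ is a field, then $A$ is $H$-prime.
   Context: A left $H$-module algebra is a $\Bbbk$-algebra $A$ with $1$ that is a left $H$-module via $h\otimes a\mapsto h.a$ such that $h.(ab)=(h_1.a)(h_2.b)$ (Sweedler notation) and $h.1=\varepsilon(h)1$. An $H$-ideal is a two-sided ideal that is an $H$-submodule. $A$ is $H$-prime if $A\neq 0$ and the product of any two nonzero $H$-ideals of $A$ is nonzero. $\operatorname{Q} A$ is the symmetric (Martindale) ring of quotients of $A$; for $q\in\operatorname{Q} A$, $D_q=\{ a \in A \mid qAa \subseteq A,\ aAq \subseteq A \}$. Let $\operatorname{Q}^H A = \{ q \in \operatorname{Q} A \mid h.(dq) = (h.d)q,\ h.(qd) = q(h.d)\ \forall h \in H, d \in D_q \}$, let $\mathcal{C} A$ be the center of $\operatorname{Q} A$ (the extended center), and let $\mathcal{C}^H A = \mathcal{C} A \cap \operatorname{Q}^H A$, the extended $H$-center of $A$. *)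

theory Defs
  imports Main "HOL.Vector_Spaces" "HOL-Algebra.Ring"
begin

text \<open>An element of V \<otimes> W (over a field k) is represented by a finite list of pairs
  [(v1,w1),...,(vn,wn)] standing for v1 \<otimes> w1 + ... + vn \<otimes> wn.  Two such lists represent
  the same tensor iff every k-bilinear form V \<times> W \<rightarrow> k takes the same value on them
  (over a field, the bilinear forms separate the points of V \<otimes> W).\<close>

definition bilinear_form ::
  "('k::field \<Rightarrow> 'v::ab_group_add \<Rightarrow> 'v) \<Rightarrow> ('k \<Rightarrow> 'w::ab_group_add \<Rightarrow> 'w) \<Rightarrow> ('v \<Rightarrow> 'w \<Rightarrow> 'k) \<Rightarrow> bool"
  where "bilinear_form sV sW \<phi> \<longleftrightarrow>
     (\<forall>w. Vector_Spaces.linear sV ((*)) (\<lambda>v. \<phi> v w)) \<and>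
     (\<forall>v. Vector_Spaces.linear sW ((*)) (\<lambda>w. \<phi> v w))"

definition tensor_eq ::
  "('k::field \<Rightarrow> 'v::ab_group_add \<Rightarrow> 'v) \<Rightarrow> ('k \<Rightarrow> 'w::ab_group_add \<Rightarrow> 'w) \<Rightarrow>
   ('v \<times> 'w) list \<Rightarrow> ('v \<times> 'w) list \<Rightarrow> bool"
  where "tensor_eq sV sW xs ys \<longleftrightarrow>
     (\<forall>\<phi>. bilinear_form sV sW \<phi> \<longrightarrow>
        (\<Sum>(v,w)\<leftarrow>xs. \<phi> v w) = (\<Sum>(v,w)\<leftarrow>ys. \<phi> v w))"

definition trilinear_form ::
  "('k::field \<Rightarrow> 'v::ab_group_add \<Rightarrow> 'v) \<Rightarrow> ('v \<Rightarrow> 'v \<Rightarrow> 'v \<Rightarrow> 'k) \<Rightarrow> bool"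
  where "trilinear_form sV \<phi> \<longleftrightarrow>
     (\<forall>y z. Vector_Spaces.linear sV ((*)) (\<lambda>x. \<phi> x y z)) \<and>
     (\<forall>x z. Vector_Spaces.linear sV ((*)) (\<lambda>y. \<phi> x y z)) \<and>
     (\<forall>x y. Vector_Spaces.linear sV ((*)) (\<lambda>z. \<phi> x y z))"

definition tensor3_eq ::
  "('k::field \<Rightarrow> 'v::ab_group_add \<Rightarrow> 'v) \<Rightarrow> ('v \<times> 'v \<times> 'v) list \<Rightarrow> ('v \<times> 'v \<times> 'v) list \<Rightarrow> bool"
  where "tensor3_eq sV xs ys \<longleftrightarrow>
     (\<forall>\<phi>. trilinear_form sV \<phi> \<longrightarrow>
        (\<Sum>(x,y,z)\<leftarrow>xs. \<phi> x y z) = (\<Sum>(x,y,z)\<leftarrow>ys. \<phi> x y z))"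

definition k_algebra :: "('k::field \<Rightarrow> 'r::ring_1 \<Rightarrow> 'r) \<Rightarrow> bool"
  where "k_algebra s \<longleftrightarrow> vector_space s \<and>
     (\<forall>c x y. s c (x * y) = s c x * y \<and> s c (x * y) = x * s c y)"

definition hopf_algebra ::
  "('k::field \<Rightarrow> 'h::ring_1 \<Rightarrow> 'h) \<Rightarrow> ('h \<Rightarrow> ('h \<times> 'h) list) \<Rightarrow> ('h \<Rightarrow> 'k) \<Rightarrow> ('h \<Rightarrow> 'h) \<Rightarrow> bool"
  where "hopf_algebra sH \<Delta> \<epsilon> S \<longleftrightarrow>
     k_algebra sH \<and>
     \<comment> \<open>\<Delta> is k-linear H \<rightarrow> H \<otimes> H\<close>
     (\<forall>c g h. tensor_eq sH sH (\<Delta> (sH c g + h))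
                 (map (\<lambda>(x,y). (sH c x, y)) (\<Delta> g) @ \<Delta> h)) \<and>
     \<comment> \<open>\<epsilon> is k-linear H \<rightarrow> k\<close>
     Vector_Spaces.linear sH ((*)) \<epsilon> \<and>
     \<comment> \<open>coassociativity\<close>
     (\<forall>h. tensor3_eq sH
            (concat (map (\<lambda>(x,y). map (\<lambda>(u,v). (u,v,y)) (\<Delta> x)) (\<Delta> h)))
            (concat (map (\<lambda>(x,y). map (\<lambda>(u,v). (x,u,v)) (\<Delta> y)) (\<Delta> h)))) \<and>
     \<comment> \<open>counit\<close>
     (\<forall>h. (\<Sum>(x,y)\<leftarrow>\<Delta> h. sH (\<epsilon> x) y) = h \<and> (\<Sum>(x,y)\<leftarrow>\<Delta> h. sH (\<epsilon> y) x) = h) \<and>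
     \<comment> \<open>\<Delta> and \<epsilon> are algebra maps\<close>
     (\<forall>g h. tensor_eq sH sH (\<Delta> (g * h))
              (concat (map (\<lambda>(x,y). map (\<lambda>(x',y'). (x * x', y * y')) (\<Delta> h)) (\<Delta> g)))) \<and>
     tensor_eq sH sH (\<Delta> 1) [(1,1)] \<and>
     (\<forall>g h. \<epsilon> (g * h) = \<epsilon> g * \<epsilon> h) \<and> \<epsilon> 1 = 1 \<and>
     \<comment> \<open>antipode\<close>
     Vector_Spaces.linear sH sH S \<and>
     (\<forall>h. (\<Sum>(x,y)\<leftarrow>\<Delta> h. S x * y) = sH (\<epsilon> h) 1 \<and>
          (\<Sum>(x,y)\<leftarrow>\<Delta> h. x * S y) = sH (\<epsilon> h) 1)"

definition module_algebra ::
  "('k::field \<Rightarrow> 'h::ring_1 \<Rightarrow> 'h) \<Rightarrow> ('h \<Rightarrow> ('h \<times> 'h) list) \<Rightarrow> ('h \<Rightarrow> 'k) \<Rightarrow>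
   ('k \<Rightarrow> 'a::ring_1 \<Rightarrow> 'a) \<Rightarrow> ('h \<Rightarrow> 'a \<Rightarrow> 'a) \<Rightarrow> bool"
  where "module_algebra sH \<Delta> \<epsilon> sA act \<longleftrightarrow>
     k_algebra sA \<and>
     \<comment> \<open>left H-module (k-bilinear action)\<close>
     (\<forall>h. Vector_Spaces.linear sA sA (act h)) \<and>
     (\<forall>a. Vector_Spaces.linear sH sA (\<lambda>h. act h a)) \<and>
     (\<forall>a. act 1 a = a) \<and>
     (\<forall>g h a. act (g * h) a = act g (act h a)) \<and>
     \<comment> \<open>module algebra axioms\<close>
     (\<forall>h a b. act h (a * b) = (\<Sum>(x,y)\<leftarrow>\<Delta> h. act x a * act y b)) \<and>
     (\<forall>h. act h 1 = sA (\<epsilon> h) 1)"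

definition ring_ideal :: "'a::ring_1 set \<Rightarrow> bool"
  where "ring_ideal I \<longleftrightarrow> 0 \<in> I \<and> (\<forall>x\<in>I. \<forall>y\<in>I. x + y \<in> I) \<and> (\<forall>x\<in>I. - x \<in> I) \<and>
     (\<forall>x\<in>I. \<forall>r. r * x \<in> I \<and> x * r \<in> I)"

definition H_ideal :: "('h \<Rightarrow> 'a::ring_1 \<Rightarrow> 'a) \<Rightarrow> 'a set \<Rightarrow> bool"
  where "H_ideal act I \<longleftrightarrow> ring_ideal I \<and> (\<forall>h. \<forall>x\<in>I. act h x \<in> I)"

definition ideal_prod :: "'a::ring_1 set \<Rightarrow> 'a set \<Rightarrow> 'a set"
  where "ideal_prod I J = {(\<Sum>(x,y)\<leftarrow>ps. x * y) | ps. set ps \<subseteq> I \<times> J}"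

definition H_prime :: "('h \<Rightarrow> 'a::ring_1 \<Rightarrow> 'a) \<Rightarrow> bool"
  where "H_prime act \<longleftrightarrow> (UNIV :: 'a set) \<noteq> {0} \<and>
     (\<forall>I J. H_ideal act I \<and> H_ideal act J \<and> I \<noteq> {0} \<and> J \<noteq> {0} \<longrightarrow> ideal_prod I J \<noteq> {0})"

definition semiprime :: "'a::ring_1 itself \<Rightarrow> bool"
  where "semiprime _ \<longleftrightarrow> (\<forall>I::'a set. ring_ideal I \<and> ideal_prod I I = {0} \<longrightarrow> I = {0})"

definition dense_ideals :: "'a::ring_1 set set"
  where "dense_ideals = {I. ring_ideal I \<and>
     (\<forall>x. (\<forall>i\<in>I. x * i = 0) \<longrightarrow> x = 0) \<and> (\<forall>x. (\<forall>i\<in>I. i * x = 0) \<longrightarrow> x = 0)}"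

text \<open>\<iota> : A \<rightarrow> Q exhibits Q as the symmetric ring of quotients of A (characterization
  of Beidar--Martindale--Mikhalev; Q is unique up to isomorphism over A).\<close>
definition sym_ring_of_quotients :: "('a::ring_1 \<Rightarrow> 'q::ring_1) \<Rightarrow> bool"
  where "sym_ring_of_quotients \<iota> \<longleftrightarrow>
     inj \<iota> \<and> (\<forall>x y. \<iota> (x + y) = \<iota> x + \<iota> y) \<and> (\<forall>x y. \<iota> (x * y) = \<iota> x * \<iota> y) \<and> \<iota> 1 = 1 \<and>
     (\<forall>q. \<exists>I\<in>dense_ideals. \<forall>x\<in>I. q * \<iota> x \<in> range \<iota> \<and> \<iota> x * q \<in> range \<iota>) \<and>
     (\<forall>q. \<forall>I\<in>dense_ideals. (\<forall>x\<in>I. q * \<iota> x = 0) \<longrightarrow> q = 0) \<and>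
     (\<forall>q. \<forall>I\<in>dense_ideals. (\<forall>x\<in>I. \<iota> x * q = 0) \<longrightarrow> q = 0) \<and>
     (\<forall>I\<in>dense_ideals. \<forall>f g.
        (\<forall>x\<in>I. \<forall>y\<in>I. f (x + y) = f x + f y \<and> g (x + y) = g x + g y) \<and>
        (\<forall>x\<in>I. \<forall>r. f (x * r) = f x * r \<and> g (r * x) = r * g x) \<and>
        (\<forall>x\<in>I. \<forall>y\<in>I. x * f y = g x * y) \<longrightarrow>
        (\<exists>q. \<forall>x\<in>I. q * \<iota> x = \<iota> (f x) \<and> \<iota> x * q = \<iota> (g x)))"

definition D_set :: "('a::ring_1 \<Rightarrow> 'q::ring_1) \<Rightarrow> 'q \<Rightarrow> 'a set"
  where "D_set \<iota> q = {a. \<forall>r. q * \<iota> r * \<iota> a \<in> range \<iota> \<and> \<iota> a * \<iota> r * q \<in> range \<iota>}"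

definition QH :: "('h \<Rightarrow> 'a::ring_1 \<Rightarrow> 'a) \<Rightarrow> ('a \<Rightarrow> 'q::ring_1) \<Rightarrow> 'q set"
  where "QH act \<iota> = {q. \<forall>h. \<forall>d\<in>D_set \<iota> q. \<forall>e.
      (\<iota> e = \<iota> d * q \<longrightarrow> \<iota> (act h e) = \<iota> (act h d) * q) \<and>
      (\<iota> e = q * \<iota> d \<longrightarrow> \<iota> (act h e) = q * \<iota> (act h d))}"

definition extended_center :: "'q::ring_1 set"
  where "extended_center = {q. \<forall>p. q * p = p * q}"

definition extended_H_center :: "('h \<Rightarrow> 'a::ring_1 \<Rightarrow> 'a) \<Rightarrow> ('a \<Rightarrow> 'q::ring_1) \<Rightarrow> 'q set"
  where "extended_H_center act \<iota> = extended_center \<inter> QH act \<iota>"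

definition subring_struct :: "'q::ring_1 set \<Rightarrow> 'q ring"
  where "subring_struct C = \<lparr>carrier = C, monoid.mult = (*), one = 1, zero = 0, add = (+)\<rparr>"

end

theory Submission
  imports Defs "HOL-Library.Set_Algebras"
begin

text \<open>A central element \<open>q\<close> of \<open>Q A\<close> lies in \<open>Q\<^sup>H A\<close> as soon as it is \<open>H\<close>-linear on a single
  dense \<open>H\<close>-ideal \<open>J\<close> with \<open>q J \<subseteq> A\<close>: for \<open>e = q d\<close> the antipode moves \<open>h\<close> off \<open>k \<in> J\<close> in
  \<open>h.(e k) = h.(d (q k))\<close>, and density of \<open>J\<close> cancels \<open>k\<close>.  Hence \<open>C\<^sup>H A\<close> is a commutative
  subring of \<open>Q A\<close>, and every \<open>H\<close>-linear bimodule map on a dense \<open>H\<close>-ideal is one of its elements.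

  If \<open>A\<close> is \<open>H\<close>-prime and \<open>q \<noteq> 0\<close>, the \<open>H\<close>-ideals \<open>q A \<inter> A\<close> and \<open>{a. q a = 0}\<close> multiply to
  zero, so the second vanishes and \<open>q a \<mapsto> a\<close> is a bimodule map on the dense \<open>H\<close>-ideal
  \<open>q A \<inter> A\<close>: this is \<open>q\<inverse>\<close>.  Conversely, if \<open>A\<close> is semiprime and \<open>I J = 0\<close> for nonzero
  \<open>H\<close>-ideals, then \<open>I \<oplus> l.ann(I)\<close> is a dense \<open>H\<close>-ideal containing \<open>J\<close>, and the projection onto
  \<open>I\<close> is an idempotent of \<open>C\<^sup>H A\<close> different from \<open>0\<close> and \<open>1\<close>, impossible in a field.\<close>

section \<open>Linear algebra and the antipode\<close>

lemma linear_sum_list: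
  assumes "Vector_Spaces.linear s1 s2 f"
  shows "f (\<Sum>x\<leftarrow>xs. g x) = (\<Sum>x\<leftarrow>xs. f (g x))"
proof -
  interpret linear s1 s2 f by fact
  show ?thesis by (induction xs) (simp_all add: add)
qed

lemma exists_linear_functional_nonzero:
  fixes s :: "'k::field \<Rightarrow> 'v::ab_group_add \<Rightarrow> 'v"
  assumes "vector_space s" and "v \<noteq> 0"
  shows "\<exists>\<phi>. Vector_Spaces.linear s (*) \<phi> \<and> \<phi> v \<noteq> 0"
proof -
  interpret vector_space s by fact
  have ind: "independent {v}" using \<open>v \<noteq> 0\<close> by simp
  define B where "B = extend_basis {v}"
  have "independent B" and "span B = UNIV" and "v \<in> B"
    using independent_extend_basis[OF ind] span_extend_basis[OF ind] extend_basis_superset[OF ind]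
    unfolding B_def by auto
  then have "Vector_Spaces.linear s (*) (\<lambda>w. representation B w v)"
    and "representation B v v = 1"
    using linear_representation representation_basis by auto
  then show ?thesis by auto
qed

lemma tensor3_eq_trilinear_map:
  fixes sV :: "'k::field \<Rightarrow> 'v::ab_group_add \<Rightarrow> 'v"
  assumes vs: "vector_space sV" and eq: "tensor3_eq sH xs ys"
    and "\<And>y z. Vector_Spaces.linear sH sV (\<lambda>x. T x y z)"
    and "\<And>x z. Vector_Spaces.linear sH sV (\<lambda>y. T x y z)"
    and "\<And>x y. Vector_Spaces.linear sH sV (\<lambda>z. T x y z)"
  shows "(\<Sum>(x, y, z)\<leftarrow>xs. T x y z) = (\<Sum>(x, y, z)\<leftarrow>ys. T x y z)"
proof (rule ccontr)
  let ?L = "\<Sum>(x, y, z)\<leftarrow>xs. T x y z" and ?R = "\<Sum>(x, y, z)\<leftarrow>ys. T x y z"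
  assume "?L \<noteq> ?R"
  then obtain \<phi> where \<phi>: "Vector_Spaces.linear sV (*) \<phi>" and ne: "\<phi> (?L - ?R) \<noteq> 0"
    using exists_linear_functional_nonzero[OF vs] by (metis right_minus_eq)
  interpret \<phi>: linear sV "(*)" \<phi> by fact
  have "trilinear_form sH (\<lambda>x y z. \<phi> (T x y z))"
    unfolding trilinear_form_def
    using Vector_Spaces.linear_compose[OF assms(3) \<phi>] Vector_Spaces.linear_compose[OF assms(4) \<phi>]
      Vector_Spaces.linear_compose[OF assms(5) \<phi>]
    by (simp add: comp_def)
  then have "(\<Sum>(x, y, z)\<leftarrow>xs. \<phi> (T x y z)) = (\<Sum>(x, y, z)\<leftarrow>ys. \<phi> (T x y z))"
    using eq unfolding tensor3_eq_def by blast
  then have "\<phi> ?L = \<phi> ?R"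
    by (simp add: linear_sum_list[OF \<phi>] split_def)
  then show False using ne by (simp add: \<phi>.diff)
qed

lemma linear_diff_fun:
  assumes "Vector_Spaces.linear s1 s2 f" and "Vector_Spaces.linear s1 s2 g"
  shows "Vector_Spaces.linear s1 s2 (\<lambda>x. f x - g x)"
proof -
  interpret f: linear s1 s2 f by fact
  interpret g: linear s1 s2 g by fact
  show ?thesis
    unfolding linear_iff
    by (simp add: f.vs1.vector_space_axioms f.vs2.vector_space_axioms f.add g.add f.scale g.scale
        f.vs2.scale_right_diff_distrib)
qed

lemma sum_list_concat_map:
  "(\<Sum>x\<leftarrow>concat (map f xs). g x) = (\<Sum>y\<leftarrow>xs. \<Sum>x\<leftarrow>f y. g x)"
  by (induction xs) simp_all

lemma
  assumes "k_algebra s"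
  shows k_algebra_mult_left_linear: "Vector_Spaces.linear s s (\<lambda>z. y * z)"
    and k_algebra_mult_right_linear: "Vector_Spaces.linear s s (\<lambda>z. z * y)"
  using assms unfolding k_algebra_def linear_iff by (metis distrib_left distrib_right)+

lemma
  assumes "hopf_algebra sH \<Delta> \<epsilon> S"
  shows hopf_algebra_k_algebra: "k_algebra sH"
    and hopf_algebra_counit: "(\<Sum>(x, y)\<leftarrow>\<Delta> h. sH (\<epsilon> y) x) = h"
    and hopf_algebra_antipode: "(\<Sum>(x, y)\<leftarrow>\<Delta> h. x * S y) = sH (\<epsilon> h) 1"
    and hopf_algebra_coassoc: "tensor3_eq sH
       (concat (map (\<lambda>(x, y). map (\<lambda>(u, v). (u, v, y)) (\<Delta> x)) (\<Delta> h)))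
       (concat (map (\<lambda>(x, y). map (\<lambda>(u, v). (x, u, v)) (\<Delta> y)) (\<Delta> h)))"
    and hopf_algebra_antipode_linear: "Vector_Spaces.linear sH sH S"
  using assms unfolding hopf_algebra_def by blast+

text \<open>Since \<open>h = \<Sum> h\<^sub>1 \<epsilon>(h\<^sub>2) = \<Sum> h\<^sub>1 h\<^sub>2 S(h\<^sub>3)\<close>, coassociativity rewrites \<open>F h k\<close>
  as the sum over \<open>(h)\<close> of the vanishing sums \<open>\<Sum> F h\<^sub>1\<^sub>1 (h\<^sub>1\<^sub>2 . S(h\<^sub>2) . k)\<close>.\<close>

lemma sweedler_sum_zero_imp_zero:
  fixes sH :: "'k::field \<Rightarrow> 'h::ring_1 \<Rightarrow> 'h"
    and sV :: "'k \<Rightarrow> 'v::ab_group_add \<Rightarrow> 'v"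
    and act :: "'h \<Rightarrow> 'a \<Rightarrow> 'a"
    and F :: "'h \<Rightarrow> 'a \<Rightarrow> 'v"
  assumes hopf: "hopf_algebra sH \<Delta> \<epsilon> S" and vs: "vector_space sV"
    and act_mult: "\<And>g h a. act (g * h) a = act g (act h a)"
    and act_one: "\<And>a. act 1 a = a"
    and stable: "\<And>h k. k \<in> J \<Longrightarrow> act h k \<in> J"
    and linear_left: "\<And>z. z \<in> J \<Longrightarrow> Vector_Spaces.linear sH sV (\<lambda>x. F x z)"
    and linear_right: "\<And>x k. k \<in> J \<Longrightarrow> Vector_Spaces.linear sH sV (\<lambda>y. F x (act y k))"
    and vanish: "\<And>h k. k \<in> J \<Longrightarrow> (\<Sum>(x, y)\<leftarrow>\<Delta> h. F x (act y k)) = 0"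
    and k: "k \<in> J"
  shows "F h k = 0"
proof -
  define T where "T x y z = F x (act y (act (S z) k))" for x y z
  have Sk: "act (S z) k \<in> J" for z
    using stable k .
  have F_scale: "F (sH c x) k = F x (act (sH c 1) k)" for c x
  proof -
    interpret l: linear sH sV "\<lambda>x. F x k" using linear_left k .
    interpret r: linear sH sV "\<lambda>y. F x (act y k)" using linear_right k .
    show ?thesis using l.scale[of c x] r.scale[of c 1] act_one by simp
  qed
  have F_antipode: "F x (act (sH (\<epsilon> y) 1) k) = (\<Sum>(u, v)\<leftarrow>\<Delta> y. T x u v)" for x y
    unfolding hopf_algebra_antipode[OF hopf, symmetric]
    by (simp add: linear_sum_list[OF linear_right[OF k]] split_def act_mult T_def)
  have "F h k = (\<Sum>(x, y)\<leftarrow>\<Delta> h. F (sH (\<epsilon> y) x) k)"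
    by (subst (1) hopf_algebra_counit[OF hopf, symmetric]) (simp add: linear_sum_list[OF linear_left[OF k]] split_def)
  also have "\<dots> = (\<Sum>(x, y)\<leftarrow>\<Delta> h. \<Sum>(u, v)\<leftarrow>\<Delta> y. T x u v)"
    by (simp add: F_scale F_antipode)
  also have "\<dots> = (\<Sum>(x, y, z)\<leftarrow>concat (map (\<lambda>(x, y). map (\<lambda>(u, v). (x, u, v)) (\<Delta> y)) (\<Delta> h)). T x y z)"
    by (simp add: sum_list_concat_map split_def comp_def)
  also have "\<dots> = (\<Sum>(x, y, z)\<leftarrow>concat (map (\<lambda>(x, y). map (\<lambda>(u, v). (u, v, y)) (\<Delta> x)) (\<Delta> h)). T x y z)"
  proof (rule tensor3_eq_trilinear_map[OF vs hopf_algebra_coassoc[OF hopf], symmetric])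
    show "Vector_Spaces.linear sH sV (\<lambda>x. T x y z)" for y z
      unfolding T_def using linear_left stable Sk by blast
    show "Vector_Spaces.linear sH sV (\<lambda>y. T x y z)" for x z
      unfolding T_def using linear_right Sk by blast
    show "Vector_Spaces.linear sH sV (\<lambda>z. T x y z)" for x y
      using Vector_Spaces.linear_compose[OF hopf_algebra_antipode_linear[OF hopf]
          Vector_Spaces.linear_compose[OF k_algebra_mult_left_linear[OF hopf_algebra_k_algebra[OF hopf]]
            linear_right[OF k]]]
      by (simp add: T_def comp_def act_mult)
  qed
  also have "\<dots> = (\<Sum>(x, y)\<leftarrow>\<Delta> h. \<Sum>(u, v)\<leftarrow>\<Delta> x. T u v y)"
    by (simp add: sum_list_concat_map split_def comp_def)
  also have "\<dots> = 0"
    using vanish[OF Sk] by (simp add: T_def split_def)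
  finally show ?thesis .
qed

section \<open>Ideals, annihilators and dense ideals\<close>

lemma ring_idealI:
  assumes "0 \<in> I" and "\<And>x y. x \<in> I \<Longrightarrow> y \<in> I \<Longrightarrow> x + y \<in> I" and "\<And>x. x \<in> I \<Longrightarrow> - x \<in> I"
    and "\<And>x r. x \<in> I \<Longrightarrow> r * x \<in> I" and "\<And>x r. x \<in> I \<Longrightarrow> x * r \<in> I"
  shows "ring_ideal I"
  using assms unfolding ring_ideal_def by simp

lemma
  assumes "ring_ideal I"
  shows ring_ideal_zero: "0 \<in> I"
    and ring_ideal_add: "x \<in> I \<Longrightarrow> y \<in> I \<Longrightarrow> x + y \<in> I"
    and ring_ideal_uminus: "x \<in> I \<Longrightarrow> - x \<in> I"
    and ring_ideal_mult_left: "x \<in> I \<Longrightarrow> r * x \<in> I"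
    and ring_ideal_mult_right: "x \<in> I \<Longrightarrow> x * r \<in> I"
  using assms by (simp_all add: ring_ideal_def)

lemma ring_ideal_diff: "ring_ideal I \<Longrightarrow> x \<in> I \<Longrightarrow> y \<in> I \<Longrightarrow> x - y \<in> I"
  using ring_ideal_add ring_ideal_uminus by (metis diff_conv_add_uminus)

lemma ring_ideal_UNIV: "ring_ideal UNIV"
  by (simp add: ring_ideal_def)

lemma ring_ideal_Int: "ring_ideal I \<Longrightarrow> ring_ideal J \<Longrightarrow> ring_ideal (I \<inter> J)"
  unfolding ring_ideal_def by blast

lemma ring_ideal_set_plus:
  assumes I: "ring_ideal I" and J: "ring_ideal J"
  shows "ring_ideal (I + J)"
proof (rule ring_idealI)
  show "0 \<in> I + J"
    using set_plus_intro[OF ring_ideal_zero[OF I] ring_ideal_zero[OF J]] by simp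
next
  fix x y r assume "x \<in> I + J"
  then obtain i j where x: "x = i + j" and i: "i \<in> I" and j: "j \<in> J"
    by (auto elim: set_plus_elim)
  show "- x \<in> I + J"
    using set_plus_intro[OF ring_ideal_uminus[OF I i] ring_ideal_uminus[OF J j]] x by simp
  show "r * x \<in> I + J"
    using set_plus_intro[OF ring_ideal_mult_left[OF I i] ring_ideal_mult_left[OF J j]] x
    by (simp add: distrib_left)
  show "x * r \<in> I + J"
    using set_plus_intro[OF ring_ideal_mult_right[OF I i] ring_ideal_mult_right[OF J j]] x
    by (simp add: distrib_right)
  assume "y \<in> I + J"
  then obtain i' j' where y: "y = i' + j'" and i': "i' \<in> I" and j': "j' \<in> J"
    by (auto elim: set_plus_elim)
  show "x + y \<in> I + J"
    using set_plus_intro[OF ring_ideal_add[OF I i i'] ring_ideal_add[OF J j j']] x y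
    by (simp add: ac_simps)
qed

lemma H_ideal_Int: "H_ideal act I \<Longrightarrow> H_ideal act J \<Longrightarrow> H_ideal act (I \<inter> J)"
  unfolding H_ideal_def using ring_ideal_Int by blast

lemma ideal_prod_eq_zero_iff: "ideal_prod I J = {0} \<longleftrightarrow> (\<forall>x\<in>I. \<forall>y\<in>J. x * y = 0)"
proof
  assume "ideal_prod I J = {0}"
  moreover have "x * y \<in> ideal_prod I J" if "x \<in> I" "y \<in> J" for x y
    unfolding ideal_prod_def using that by (intro CollectI exI[of _ "[(x, y)]"]) auto
  ultimately show "\<forall>x\<in>I. \<forall>y\<in>J. x * y = 0" by blast
next
  assume zero: "\<forall>x\<in>I. \<forall>y\<in>J. x * y = 0"
  have "(\<Sum>(x, y)\<leftarrow>ps. x * y) = 0" if "set ps \<subseteq> I \<times> J" for ps :: "('a \<times> 'a) list"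
    using that zero by (induction ps) auto
  moreover have "(0::'a) \<in> ideal_prod I J"
    unfolding ideal_prod_def by (intro CollectI exI[of _ "[]"]) simp
  ultimately show "ideal_prod I J = {0}" unfolding ideal_prod_def by blast
qed

definition left_annihilator :: "'a::ring_1 set \<Rightarrow> 'a set"
  where "left_annihilator I = {x. \<forall>i\<in>I. x * i = 0}"

definition right_annihilator :: "'a::ring_1 set \<Rightarrow> 'a set"
  where "right_annihilator I = {x. \<forall>i\<in>I. i * x = 0}"

lemma ring_ideal_left_annihilator:
  assumes "ring_ideal I" shows "ring_ideal (left_annihilator I)"
  using ring_ideal_mult_left[OF assms]
  by (intro ring_idealI) (auto simp: left_annihilator_def distrib_right mult.assoc)

lemma ring_ideal_right_annihilator:
  assumes "ring_ideal I" shows "ring_ideal (right_annihilator I)"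
  using ring_ideal_mult_right[OF assms]
  by (intro ring_idealI) (auto simp: right_annihilator_def distrib_left mult.assoc[symmetric])

lemma dense_idealsI:
  assumes "ring_ideal I"
    and "\<And>x. (\<And>i. i \<in> I \<Longrightarrow> x * i = 0) \<Longrightarrow> x = 0"
    and "\<And>x. (\<And>i. i \<in> I \<Longrightarrow> i * x = 0) \<Longrightarrow> x = 0"
  shows "I \<in> dense_ideals"
  using assms unfolding dense_ideals_def by blast

lemma
  assumes "I \<in> dense_ideals"
  shows dense_ideals_ring_ideal: "ring_ideal I"
    and dense_ideals_left_annihilator: "(\<And>i. i \<in> I \<Longrightarrow> x * i = 0) \<Longrightarrow> x = 0"
    and dense_ideals_right_annihilator: "(\<And>i. i \<in> I \<Longrightarrow> i * x = 0) \<Longrightarrow> x = 0"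
  using assms unfolding dense_ideals_def by blast+

lemma UNIV_dense_ideals: "UNIV \<in> dense_ideals"
  by (rule dense_idealsI[OF ring_ideal_UNIV]) (metis UNIV_I mult_1_right mult_1_left)+

lemma dense_ideals_mono:
  "I \<in> dense_ideals \<Longrightarrow> I \<subseteq> J \<Longrightarrow> ring_ideal J \<Longrightarrow> J \<in> dense_ideals"
  unfolding dense_ideals_def by blast

lemma dense_ideals_products:
  assumes I: "I \<in> dense_ideals" and J: "J \<in> dense_ideals" and "ring_ideal K"
    and prod: "\<And>i j. i \<in> I \<Longrightarrow> j \<in> J \<Longrightarrow> i * j \<in> K"
  shows "K \<in> dense_ideals"
proof (rule dense_idealsI[OF \<open>ring_ideal K\<close>])
  fix x assume "\<And>k. k \<in> K \<Longrightarrow> x * k = 0"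
  then have "x * i * j = 0" if "i \<in> I" "j \<in> J" for i j
    using prod[OF that] by (simp add: mult.assoc)
  then show "x = 0"
    using dense_ideals_left_annihilator[OF I] dense_ideals_left_annihilator[OF J] by metis
next
  fix x assume "\<And>k. k \<in> K \<Longrightarrow> k * x = 0"
  then have "i * (j * x) = 0" if "i \<in> I" "j \<in> J" for i j
    using prod[OF that] by (simp flip: mult.assoc)
  then show "x = 0"
    using dense_ideals_right_annihilator[OF I] dense_ideals_right_annihilator[OF J] by metis
qed

lemma dense_ideals_Int:
  assumes I: "I \<in> dense_ideals" and J: "J \<in> dense_ideals"
  shows "I \<inter> J \<in> dense_ideals"
  using dense_ideals_ring_ideal[OF I] dense_ideals_ring_ideal[OF J]
  by (intro dense_ideals_products[OF I J] ring_ideal_Int)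
    (auto intro: ring_ideal_mult_left ring_ideal_mult_right)

lemma semiprime_Int_left_annihilator:
  assumes sp: "semiprime TYPE('a::ring_1)" and I: "ring_ideal (I :: 'a set)"
  shows "I \<inter> left_annihilator I = {0}"
proof -
  have "ring_ideal (I \<inter> left_annihilator I)"
    by (intro ring_ideal_Int ring_ideal_left_annihilator I)
  moreover have "ideal_prod (I \<inter> left_annihilator I) (I \<inter> left_annihilator I) = {0}"
    by (auto simp: ideal_prod_eq_zero_iff left_annihilator_def)
  ultimately show ?thesis using sp unfolding semiprime_def by blast
qed

lemma semiprime_Int_right_annihilator:
  assumes sp: "semiprime TYPE('a::ring_1)" and I: "ring_ideal (I :: 'a set)"
  shows "I \<inter> right_annihilator I = {0}"
proof -
  have "ring_ideal (I \<inter> right_annihilator I)"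
    by (intro ring_ideal_Int ring_ideal_right_annihilator I)
  moreover have "ideal_prod (I \<inter> right_annihilator I) (I \<inter> right_annihilator I) = {0}"
    by (auto simp: ideal_prod_eq_zero_iff right_annihilator_def)
  ultimately show ?thesis using sp unfolding semiprime_def by blast
qed

lemma semiprime_ideal_prod_zero_imp_subset_left_annihilator:
  assumes sp: "semiprime TYPE('a::ring_1)" and I: "ring_ideal (I :: 'a set)" and J: "ring_ideal J"
    and IJ: "ideal_prod I J = {0}"
  shows "J \<subseteq> left_annihilator I"
proof (intro subsetI, unfold left_annihilator_def, intro CollectI ballI)
  fix j i assume j: "j \<in> J" and i: "i \<in> I"
  have "j * i \<in> I \<inter> J"
    using ring_ideal_mult_left[OF I i] ring_ideal_mult_right[OF J j] by blast
  moreover have "j * i \<in> left_annihilator (I \<inter> J)"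
    using IJ i by (auto simp: ideal_prod_eq_zero_iff left_annihilator_def mult.assoc)
  ultimately show "j * i = 0"
    using semiprime_Int_left_annihilator[OF sp ring_ideal_Int[OF I J]] by blast
qed

lemma semiprime_dense_set_plus_left_annihilator:
  assumes sp: "semiprime TYPE('a::ring_1)" and I: "ring_ideal (I :: 'a set)"
  shows "I + left_annihilator I \<in> dense_ideals"
proof -
  let ?T = "left_annihilator I"
  have T: "ring_ideal ?T" using ring_ideal_left_annihilator[OF I] .
  have I_sub: "I \<subseteq> I + ?T" and T_sub: "?T \<subseteq> I + ?T"
    using set_plus_intro[OF _ ring_ideal_zero[OF T]] set_plus_intro[OF ring_ideal_zero[OF I]]
    by fastforce+
  show ?thesis
  proof (rule dense_idealsI[OF ring_ideal_set_plus[OF I T]])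
    fix x assume ann: "\<And>e. e \<in> I + ?T \<Longrightarrow> x * e = 0"
    then have "x \<in> ?T \<inter> left_annihilator ?T"
      using I_sub T_sub by (auto simp: left_annihilator_def)
    then show "x = 0" using semiprime_Int_left_annihilator[OF sp T] by blast
  next
    fix x assume ann: "\<And>e. e \<in> I + ?T \<Longrightarrow> e * x = 0"
    have "x * i = 0" if i: "i \<in> I" for i
    proof -
      have "x * i \<in> I \<inter> right_annihilator I"
        using ring_ideal_mult_left[OF I i] ann I_sub
        by (auto simp: right_annihilator_def mult.assoc[symmetric])
      then show ?thesis using semiprime_Int_right_annihilator[OF sp I] by blast
    qed
    then have "x \<in> ?T \<inter> right_annihilator ?T"
      using ann T_sub by (auto simp: left_annihilator_def right_annihilator_def)
    then show "x = 0" using semiprime_Int_right_annihilator[OF sp T] by blast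
  qed
qed

lemma direct_sum_projection:
  fixes I T :: "'a::ring_1 set"
  assumes I: "ring_ideal I" and T: "ring_ideal T" and IT: "I \<inter> T = {0}"
  obtains \<pi> where "\<And>i t. i \<in> I \<Longrightarrow> t \<in> T \<Longrightarrow> \<pi> (i + t) = i"
    and "\<And>x y. x \<in> I + T \<Longrightarrow> y \<in> I + T \<Longrightarrow> \<pi> (x + y) = \<pi> x + \<pi> y"
    and "\<And>x r. x \<in> I + T \<Longrightarrow> \<pi> (x * r) = \<pi> x * r"
    and "\<And>x r. x \<in> I + T \<Longrightarrow> \<pi> (r * x) = r * \<pi> x"
proof -
  define \<pi> where "\<pi> x = (THE i. i \<in> I \<and> x - i \<in> T)" for x
  have \<pi>: "\<pi> (i + t) = i" if i: "i \<in> I" and t: "t \<in> T" for i t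
    unfolding \<pi>_def
  proof (rule the_equality)
    show "i \<in> I \<and> i + t - i \<in> T" using i t by simp
    fix i' assume i': "i' \<in> I \<and> i + t - i' \<in> T"
    have "i - i' \<in> I" using ring_ideal_diff[OF I i] i' by blast
    moreover have "i - i' \<in> T"
      using ring_ideal_diff[OF T _ t, of "i + t - i'"] i' by (simp add: algebra_simps)
    ultimately have "i - i' \<in> I \<inter> T" by blast
    then show "i' = i" using IT by simp
  qed
  have sum_cases: "P x" if "x \<in> I + T" and "\<And>i t. i \<in> I \<Longrightarrow> t \<in> T \<Longrightarrow> P (i + t)" for P x
    using that by (auto elim: set_plus_elim)
  have "\<pi> (x + y) = \<pi> x + \<pi> y" if "x \<in> I + T" "y \<in> I + T" for x y
  proof (rule sum_cases[OF that(1)], rule sum_cases[OF that(2)])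
    fix i t i' t' assume it: "i \<in> I" "t \<in> T" "i' \<in> I" "t' \<in> T"
    have "\<pi> (i + t + (i' + t')) = \<pi> ((i + i') + (t + t'))" by (simp add: ac_simps)
    also have "\<dots> = \<pi> (i + t) + \<pi> (i' + t')"
      using \<pi> it ring_ideal_add[OF I it(1,3)] ring_ideal_add[OF T it(2,4)] by simp
    finally show "\<pi> (i + t + (i' + t')) = \<pi> (i + t) + \<pi> (i' + t')" .
  qed
  moreover have "\<pi> (x * r) = \<pi> x * r" if "x \<in> I + T" for x r
    using that
    by (rule sum_cases) (simp add: \<pi> distrib_right ring_ideal_mult_right[OF I] ring_ideal_mult_right[OF T])
  moreover have "\<pi> (r * x) = r * \<pi> x" if "x \<in> I + T" for x r
    using that
    by (rule sum_cases) (simp add: \<pi> distrib_left ring_ideal_mult_left[OF I] ring_ideal_mult_left[OF T])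
  ultimately show ?thesis using that \<pi> by blast
qed

section \<open>The symmetric ring of quotients\<close>

lemma subring_struct_simps [simp]:
  "carrier (subring_struct C) = C"
  "monoid.mult (subring_struct C) = (*)"
  "monoid.one (subring_struct C) = 1"
  "ring.zero (subring_struct C) = 0"
  "ring.add (subring_struct C) = (+)"
  by (simp_all add: subring_struct_def)

lemma cring_subring_struct:
  fixes C :: "'q::ring_1 set"
  assumes "0 \<in> C" and "1 \<in> C"
    and "\<And>x y. x \<in> C \<Longrightarrow> y \<in> C \<Longrightarrow> x + y \<in> C"
    and "\<And>x. x \<in> C \<Longrightarrow> - x \<in> C"
    and "\<And>x y. x \<in> C \<Longrightarrow> y \<in> C \<Longrightarrow> x * y \<in> C"
    and "\<And>x y. x \<in> C \<Longrightarrow> y \<in> C \<Longrightarrow> x * y = y * x"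
  shows "cring (subring_struct C)"
proof (rule cringI)
  show "abelian_group (subring_struct C)"
  proof (rule abelian_groupI)
    fix x assume "x \<in> carrier (subring_struct C)"
    then show "\<exists>y\<in>carrier (subring_struct C). y \<oplus>\<^bsub>subring_struct C\<^esub> x = \<zero>\<^bsub>subring_struct C\<^esub>"
      using assms(4) by (intro bexI[of _ "- x"]) auto
  qed (use assms in \<open>auto simp: ac_simps\<close>)
  show "comm_monoid (subring_struct C)"
    by (rule comm_monoidI) (use assms in \<open>auto simp: mult.assoc\<close>)
qed (auto simp: distrib_right)

lemma extended_center_commute: "q \<in> extended_center \<Longrightarrow> q * p = p * q"
  unfolding extended_center_def by blast

locale martindale_quotients =
  fixes \<iota> :: "'a::ring_1 \<Rightarrow> 'q::ring_1"
  assumes sym_ring_of_quotients: "sym_ring_of_quotients \<iota>"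
begin

lemma inj_\<iota>: "inj \<iota>"
  and \<iota>_add [simp]: "\<iota> (x + y) = \<iota> x + \<iota> y"
  and \<iota>_mult [simp]: "\<iota> (x * y) = \<iota> x * \<iota> y"
  and \<iota>_one [simp]: "\<iota> 1 = 1"
  using sym_ring_of_quotients by (simp_all add: sym_ring_of_quotients_def)

lemmas quotient_axioms =
  sym_ring_of_quotients[unfolded sym_ring_of_quotients_def, THEN conjunct2, THEN conjunct2,
    THEN conjunct2, THEN conjunct2]

lemma exists_dense_fractions:
  "\<exists>I\<in>dense_ideals. \<forall>x\<in>I. q * \<iota> x \<in> range \<iota> \<and> \<iota> x * q \<in> range \<iota>"
  using quotient_axioms[THEN conjunct1] by (rule spec)

lemma dense_ideals_annihilate_eq_0:
  "I \<in> dense_ideals \<Longrightarrow> (\<And>x. x \<in> I \<Longrightarrow> q * \<iota> x = 0) \<Longrightarrow> q = 0"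
  using quotient_axioms[THEN conjunct2, THEN conjunct1] by blast

lemma dense_ideals_bimodule_maps_extend:
  assumes "I \<in> dense_ideals"
    and "\<forall>x\<in>I. \<forall>y\<in>I. f (x + y) = f x + f y \<and> g (x + y) = g x + g y"
    and "\<forall>x\<in>I. \<forall>r. f (x * r) = f x * r \<and> g (r * x) = r * g x"
    and "\<forall>x\<in>I. \<forall>y\<in>I. x * f y = g x * y"
  shows "\<exists>q. \<forall>x\<in>I. q * \<iota> x = \<iota> (f x) \<and> \<iota> x * q = \<iota> (g x)"
  using quotient_axioms[THEN conjunct2, THEN conjunct2, THEN conjunct2] assms by blast

lemma \<iota>_eq_iff [simp]: "\<iota> x = \<iota> y \<longleftrightarrow> x = y"
  using inj_\<iota> by (simp add: inj_eq)

lemma \<iota>_zero [simp]: "\<iota> 0 = 0"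
  using \<iota>_add[of 0 0] by simp

lemma \<iota>_uminus [simp]: "\<iota> (- x) = - \<iota> x"
proof -
  have "\<iota> x + \<iota> (- x) = 0" using \<iota>_add[of x "- x", symmetric] by simp
  then show ?thesis by (simp add: add_eq_0_iff)
qed

lemma \<iota>_diff [simp]: "\<iota> (x - y) = \<iota> x - \<iota> y"
  using \<iota>_add[of x "- y"] by simp

lemma \<iota>_eq_0_iff [simp]: "\<iota> x = 0 \<longleftrightarrow> x = 0"
  using \<iota>_eq_iff[of x 0] by simp

lemma commute_range_imp_extended_center:
  assumes commute: "\<And>a. z * \<iota> a = \<iota> a * z"
  shows "z \<in> extended_center"
  unfolding extended_center_def
proof (intro CollectI allI)
  fix r
  obtain I where I: "I \<in> dense_ideals" and frac: "\<And>x. x \<in> I \<Longrightarrow> r * \<iota> x \<in> range \<iota>"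
    using exists_dense_fractions[of r] by blast
  have "(z * r - r * z) * \<iota> x = 0" if x: "x \<in> I" for x
  proof -
    obtain a where a: "r * \<iota> x = \<iota> a" using frac[OF x] by auto
    have "z * r * \<iota> x = \<iota> a * z" using a commute[of a] by (simp add: mult.assoc)
    moreover have "r * z * \<iota> x = \<iota> a * z" using a commute[of x] by (metis mult.assoc)
    ultimately show ?thesis by (simp add: algebra_simps)
  qed
  then show "z * r = r * z" using dense_ideals_annihilate_eq_0[OF I] by (metis right_minus_eq)
qed

lemma bimodule_map_extended_center:
  assumes E: "E \<in> dense_ideals"
    and add: "\<And>x y. x \<in> E \<Longrightarrow> y \<in> E \<Longrightarrow> f (x + y) = f x + f y"
    and right: "\<And>x r. x \<in> E \<Longrightarrow> f (x * r) = f x * r"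
    and left: "\<And>x r. x \<in> E \<Longrightarrow> f (r * x) = r * f x"
  shows "\<exists>q\<in>extended_center. \<forall>x\<in>E. q * \<iota> x = \<iota> (f x)"
proof -
  have "x * f y = f x * y" if "x \<in> E" "y \<in> E" for x y
    using left[OF that(2), of x] right[OF that(1), of y] by simp
  then obtain q where q: "\<And>x. x \<in> E \<Longrightarrow> q * \<iota> x = \<iota> (f x)"
    using dense_ideals_bimodule_maps_extend[OF E, of f f] add right left by blast
  have "(q * \<iota> a - \<iota> a * q) * \<iota> x = 0" if "x \<in> E" for a x
  proof -
    have "a * x \<in> E" using ring_ideal_mult_left[OF dense_ideals_ring_ideal[OF E] that] .
    then show ?thesis using q that left by (simp add: algebra_simps mult.assoc flip: \<iota>_mult)
  qed
  then have "q * \<iota> a = \<iota> a * q" for a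
    using dense_ideals_annihilate_eq_0[OF E] by (metis right_minus_eq)
  then show ?thesis using commute_range_imp_extended_center q by blast
qed

lemma extended_center_projection:
  assumes I: "ring_ideal I" and T: "ring_ideal T" and "I \<inter> T = {0}" and E: "I + T \<in> dense_ideals"
  obtains e where "e \<in> extended_center" and "\<And>i t. i \<in> I \<Longrightarrow> t \<in> T \<Longrightarrow> e * \<iota> (i + t) = \<iota> i"
proof -
  obtain \<pi> where \<pi>: "\<And>i t. i \<in> I \<Longrightarrow> t \<in> T \<Longrightarrow> \<pi> (i + t) = i"
    and add: "\<And>x y. x \<in> I + T \<Longrightarrow> y \<in> I + T \<Longrightarrow> \<pi> (x + y) = \<pi> x + \<pi> y"
    and right: "\<And>x r. x \<in> I + T \<Longrightarrow> \<pi> (x * r) = \<pi> x * r"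
    and left: "\<And>x r. x \<in> I + T \<Longrightarrow> \<pi> (r * x) = r * \<pi> x"
    using direct_sum_projection[OF I T \<open>I \<inter> T = {0}\<close>] by blast
  from E add right left have "\<exists>e\<in>extended_center. \<forall>x\<in>I + T. e * \<iota> x = \<iota> (\<pi> x)"
    by (rule bimodule_map_extended_center)
  then obtain e where "e \<in> extended_center" and e: "\<And>x. x \<in> I + T \<Longrightarrow> e * \<iota> x = \<iota> (\<pi> x)"
    by blast
  moreover have "e * \<iota> (i + t) = \<iota> i" if "i \<in> I" "t \<in> T" for i t
    using e[OF set_plus_intro[OF that]] \<pi>[OF that] by simp
  ultimately show ?thesis using that by blast
qed

lemma D_set_extended_center:
  assumes "q \<in> extended_center"
  shows "D_set \<iota> q = {a. q * \<iota> a \<in> range \<iota>}"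
proof (intro Set.set_eqI iffI)
  fix a assume "a \<in> D_set \<iota> q"
  then have "q * \<iota> 1 * \<iota> a \<in> range \<iota>" unfolding D_set_def by blast
  then show "a \<in> {a. q * \<iota> a \<in> range \<iota>}" by simp
next
  fix a assume "a \<in> {a. q * \<iota> a \<in> range \<iota>}"
  then obtain b where b: "q * \<iota> a = \<iota> b" by auto
  have "q * \<iota> r * \<iota> a = \<iota> (r * b)" and "\<iota> a * \<iota> r * q = \<iota> (b * r)" for r
    using b extended_center_commute[OF assms] by (metis \<iota>_mult mult.assoc)+
  then show "a \<in> D_set \<iota> q" unfolding D_set_def by (simp del: \<iota>_mult)
qed

lemma ring_ideal_extended_center_vimage:
  assumes q: "q \<in> extended_center" and I: "ring_ideal I"
  shows "ring_ideal {a. q * \<iota> a \<in> \<iota> ` I}"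
proof (rule ring_idealI)
  show "0 \<in> {a. q * \<iota> a \<in> \<iota> ` I}" using ring_ideal_zero[OF I] by force
next
  fix x y r assume "x \<in> {a. q * \<iota> a \<in> \<iota> ` I}"
  then obtain b where b: "b \<in> I" "q * \<iota> x = \<iota> b" by auto
  show "- x \<in> {a. q * \<iota> a \<in> \<iota> ` I}"
    using b ring_ideal_uminus[OF I b(1)] by (auto intro!: image_eqI[of _ _ "- b"])
  have "q * \<iota> (r * x) = \<iota> (r * b)"
    using b(2) extended_center_commute[OF q, of "\<iota> r"] by (metis \<iota>_mult mult.assoc)
  then show "r * x \<in> {a. q * \<iota> a \<in> \<iota> ` I}" using ring_ideal_mult_left[OF I b(1)] by blast
  have "q * \<iota> (x * r) = \<iota> (b * r)" using b by (simp flip: mult.assoc)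
  then show "x * r \<in> {a. q * \<iota> a \<in> \<iota> ` I}" using ring_ideal_mult_right[OF I b(1)] by blast
  assume "y \<in> {a. q * \<iota> a \<in> \<iota> ` I}"
  then obtain c where c: "c \<in> I" "q * \<iota> y = \<iota> c" by auto
  have "q * \<iota> (x + y) = \<iota> (b + c)" using b c by (simp add: distrib_left)
  then show "x + y \<in> {a. q * \<iota> a \<in> \<iota> ` I}" using ring_ideal_add[OF I b(1) c(1)] by blast
qed

lemma ring_ideal_extended_center_image:
  assumes q: "q \<in> extended_center" and I: "ring_ideal I"
  shows "ring_ideal {b. \<iota> b \<in> (\<lambda>a. q * \<iota> a) ` I}"
proof (rule ring_idealI)
  show "0 \<in> {b. \<iota> b \<in> (\<lambda>a. q * \<iota> a) ` I}" using ring_ideal_zero[OF I] by force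
next
  fix x y r assume "x \<in> {b. \<iota> b \<in> (\<lambda>a. q * \<iota> a) ` I}"
  then obtain d where d: "d \<in> I" "\<iota> x = q * \<iota> d" by auto
  show "- x \<in> {b. \<iota> b \<in> (\<lambda>a. q * \<iota> a) ` I}"
    using d ring_ideal_uminus[OF I d(1)] by (auto intro!: image_eqI[of _ _ "- d"])
  have "\<iota> (r * x) = q * \<iota> (r * d)"
    using d(2) extended_center_commute[OF q, of "\<iota> r"] by (metis \<iota>_mult mult.assoc)
  then show "r * x \<in> {b. \<iota> b \<in> (\<lambda>a. q * \<iota> a) ` I}" using ring_ideal_mult_left[OF I d(1)] by blast
  have "\<iota> (x * r) = q * \<iota> (d * r)" using d by (simp add: mult.assoc)
  then show "x * r \<in> {b. \<iota> b \<in> (\<lambda>a. q * \<iota> a) ` I}" using ring_ideal_mult_right[OF I d(1)] by blast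
  assume "y \<in> {b. \<iota> b \<in> (\<lambda>a. q * \<iota> a) ` I}"
  then obtain e where e: "e \<in> I" "\<iota> y = q * \<iota> e" by auto
  have "\<iota> (x + y) = q * \<iota> (d + e)" using d e by (simp add: distrib_left)
  then show "x + y \<in> {b. \<iota> b \<in> (\<lambda>a. q * \<iota> a) ` I}" using ring_ideal_add[OF I d(1) e(1)] by blast
qed

lemma D_set_dense:
  assumes q: "q \<in> extended_center"
  shows "D_set \<iota> q \<in> dense_ideals"
proof -
  obtain I where I: "I \<in> dense_ideals" and "\<forall>x\<in>I. q * \<iota> x \<in> range \<iota>"
    using exists_dense_fractions by blast
  then have "I \<subseteq> D_set \<iota> q" unfolding D_set_extended_center[OF q] by blast
  moreover have "ring_ideal (D_set \<iota> q)"
    using ring_ideal_extended_center_vimage[OF q ring_ideal_UNIV] by (simp add: D_set_extended_center[OF q])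
  ultimately show ?thesis using dense_ideals_mono[OF I] by blast
qed

end

section \<open>Module algebras and the extended \<open>H\<close>-center\<close>

locale hopf_module_algebra =
  fixes sH :: "'k::field \<Rightarrow> 'h::ring_1 \<Rightarrow> 'h"
    and \<Delta> :: "'h \<Rightarrow> ('h \<times> 'h) list"
    and \<epsilon> :: "'h \<Rightarrow> 'k"
    and S :: "'h \<Rightarrow> 'h"
    and sA :: "'k \<Rightarrow> 'a::ring_1 \<Rightarrow> 'a"
    and act :: "'h \<Rightarrow> 'a \<Rightarrow> 'a"
  assumes hopf_algebra: "hopf_algebra sH \<Delta> \<epsilon> S"
    and module_algebra: "module_algebra sH \<Delta> \<epsilon> sA act"
begin

lemma k_algebra_A: "k_algebra sA"
  and act_linear: "Vector_Spaces.linear sA sA (act h)"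
  and act_linear_H: "Vector_Spaces.linear sH sA (\<lambda>h. act h a)"
  and act_one: "act 1 a = a"
  and act_mult: "act (g * h) a = act g (act h a)"
  and act_product: "act h (a * b) = (\<Sum>(x, y)\<leftarrow>\<Delta> h. act x a * act y b)"
  using module_algebra unfolding module_algebra_def by simp_all

lemma vector_space_A: "vector_space sA"
  using k_algebra_A unfolding k_algebra_def by blast

lemma act_add [simp]: "act h (x + y) = act h x + act h y"
  using linear_iff act_linear by blast

lemma act_zero [simp]: "act h 0 = 0"
  using act_add[of h 0 0] by simp

lemma act_uminus [simp]: "act h (- x) = - act h x"
proof -
  have "act h x + act h (- x) = 0" using act_add[of h x "- x", symmetric] by simp
  then show ?thesis by (simp add: add_eq_0_iff)
qed

lemma act_mult_right_linear_H: "Vector_Spaces.linear sH sA (\<lambda>x. act x a * b)"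
  using Vector_Spaces.linear_compose[OF act_linear_H k_algebra_mult_right_linear[OF k_algebra_A]]
  by (simp add: comp_def)

lemma act_mult_left_linear_H: "Vector_Spaces.linear sH sA (\<lambda>y. b * act y a)"
  using Vector_Spaces.linear_compose[OF act_linear_H k_algebra_mult_left_linear[OF k_algebra_A]]
  by (simp add: comp_def)

lemma H_ideal_UNIV: "H_ideal act UNIV"
  by (simp add: H_ideal_def ring_ideal_UNIV)

lemma H_ideal_set_plus: "H_ideal act I \<Longrightarrow> H_ideal act J \<Longrightarrow> H_ideal act (I + J)"
  unfolding H_ideal_def using ring_ideal_set_plus by (fastforce elim!: set_plus_elim)

lemma left_annihilator_H_stable:
  assumes HI: "H_ideal act I" and t: "t \<in> left_annihilator I"
  shows "act h t \<in> left_annihilator I"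
proof -
  have stable: "\<And>h k. k \<in> I \<Longrightarrow> act h k \<in> I" using HI unfolding H_ideal_def by blast
  have "act h t * k = 0" if k: "k \<in> I" for k
  proof (rule sweedler_sum_zero_imp_zero[OF hopf_algebra vector_space_A act_mult act_one stable
        _ _ _ k, where F = "\<lambda>x z. act x t * z"])
    show "Vector_Spaces.linear sH sA (\<lambda>x. act x t * z)" for z
      by (rule act_mult_right_linear_H)
    show "Vector_Spaces.linear sH sA (\<lambda>y. act x t * act y k)" for x k
      by (rule act_mult_left_linear_H)
    show "(\<Sum>(x, y)\<leftarrow>\<Delta> h. act x t * act y k) = 0" if "k \<in> I" for h k
      using t that by (simp add: act_product[symmetric] left_annihilator_def)
  qed
  then show ?thesis unfolding left_annihilator_def by blast
qed

end

locale hopf_quotients = hopf_module_algebra sH \<Delta> \<epsilon> S sA act + martindale_quotients \<iota>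
  for sH :: "'k::field \<Rightarrow> 'h::ring_1 \<Rightarrow> 'h"
    and \<Delta> :: "'h \<Rightarrow> ('h \<times> 'h) list"
    and \<epsilon> :: "'h \<Rightarrow> 'k"
    and S :: "'h \<Rightarrow> 'h"
    and sA :: "'k \<Rightarrow> 'a::ring_1 \<Rightarrow> 'a"
    and act :: "'h \<Rightarrow> 'a \<Rightarrow> 'a"
    and \<iota> :: "'a \<Rightarrow> 'q::ring_1"
begin

definition H_equivariant_on :: "'q \<Rightarrow> 'a set \<Rightarrow> bool"
  where "H_equivariant_on q J \<longleftrightarrow> J \<in> dense_ideals \<and> H_ideal act J \<and>
     (\<forall>k\<in>J. \<exists>b. \<iota> b = q * \<iota> k \<and> (\<forall>h. \<iota> (act h b) = q * \<iota> (act h k)))"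

lemma H_equivariant_onD:
  assumes "H_equivariant_on q J"
  shows "J \<in> dense_ideals" and "H_ideal act J"
    and "k \<in> J \<Longrightarrow> \<exists>b. \<iota> b = q * \<iota> k \<and> (\<forall>h. \<iota> (act h b) = q * \<iota> (act h k))"
  using assms unfolding H_equivariant_on_def by blast+

lemma extended_H_center_imp_extended_center:
  "q \<in> extended_H_center act \<iota> \<Longrightarrow> q \<in> extended_center"
  unfolding extended_H_center_def by blast

lemma extended_H_center_act:
  assumes q: "q \<in> extended_H_center act \<iota>" and e: "\<iota> e = q * \<iota> d"
  shows "\<iota> (act h e) = q * \<iota> (act h d)"
proof -
  have "d \<in> D_set \<iota> q"
    using D_set_extended_center[OF extended_H_center_imp_extended_center[OF q]] e
    by (metis CollectI rangeI)
  moreover have "q \<in> QH act \<iota>" using q unfolding extended_H_center_def by blast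
  ultimately show ?thesis using e unfolding QH_def by blast
qed

lemma H_equivariant_on_D_set:
  assumes q: "q \<in> extended_H_center act \<iota>"
  shows "H_equivariant_on q (D_set \<iota> q)"
proof -
  note D_set_eq = D_set_extended_center[OF extended_H_center_imp_extended_center[OF q]]
  have lift: "\<exists>b. \<iota> b = q * \<iota> k \<and> (\<forall>h. \<iota> (act h b) = q * \<iota> (act h k))" if "k \<in> D_set \<iota> q" for k
    using that extended_H_center_act[OF q] by (auto simp: D_set_eq)
  moreover have "act h k \<in> D_set \<iota> q" if "k \<in> D_set \<iota> q" for h k
    using lift[OF that] unfolding D_set_eq by (metis CollectI rangeI)
  ultimately show ?thesis
    using D_set_dense[OF extended_H_center_imp_extended_center[OF q]] dense_ideals_ring_ideal
    unfolding H_equivariant_on_def H_ideal_def by blast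
qed

lemma H_equivariant_on_lift:
  assumes "H_equivariant_on q J"
  obtains c where "\<And>k. k \<in> J \<Longrightarrow> \<iota> (c k) = q * \<iota> k"
    and "\<And>h k. k \<in> J \<Longrightarrow> c (act h k) = act h (c k)"
proof
  define c where "c k = inv_into UNIV \<iota> (q * \<iota> k)" for k
  fix h k assume k: "k \<in> J"
  obtain b where "\<iota> b = q * \<iota> k" and "\<And>h. \<iota> (act h b) = q * \<iota> (act h k)"
    using H_equivariant_onD(3)[OF assms k] by blast
  then show "\<iota> (c k) = q * \<iota> k" and "c (act h k) = act h (c k)"
    unfolding c_def by (metis inv_into_f_f inj_\<iota> UNIV_I)+
qed

lemma H_equivariant_on_act_mult:
  assumes center: "q \<in> extended_center" and eqv: "H_equivariant_on q J"
    and e: "\<iota> e = q * \<iota> d" and k: "k \<in> J"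
  shows "\<iota> (act h e) * \<iota> k = q * \<iota> (act h d) * \<iota> k"
proof -
  have stable: "\<And>h k. k \<in> J \<Longrightarrow> act h k \<in> J"
    using H_equivariant_onD(2)[OF eqv] unfolding H_ideal_def by blast
  obtain c where c: "\<And>k. k \<in> J \<Longrightarrow> \<iota> (c k) = q * \<iota> k"
    and c_act: "\<And>h k. k \<in> J \<Longrightarrow> c (act h k) = act h (c k)"
    using H_equivariant_on_lift[OF eqv] by blast
  have "act h e * k - act h d * c k = 0"
  proof (rule sweedler_sum_zero_imp_zero[OF hopf_algebra vector_space_A act_mult act_one stable
        _ _ _ k, where F = "\<lambda>x z. act x e * z - act x d * c z"])
    show "Vector_Spaces.linear sH sA (\<lambda>x. act x e * z - act x d * c z)" for z
      by (intro linear_diff_fun act_mult_right_linear_H)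
    show "Vector_Spaces.linear sH sA (\<lambda>y. act x e * act y k - act x d * c (act y k))"
      if "k \<in> J" for x k
      using linear_diff_fun[OF act_mult_left_linear_H act_mult_left_linear_H]
      by (simp add: c_act[OF that])
    show "(\<Sum>(x, y)\<leftarrow>\<Delta> h. act x e * act y k - act x d * c (act y k)) = 0" if "k \<in> J" for h k
    proof -
      have "\<iota> (e * k) = \<iota> (d * c k)"
        using e c[OF that] extended_center_commute[OF center, of "\<iota> d"] by (metis \<iota>_mult mult.assoc)
      then have "e * k = d * c k" by (rule injD[OF inj_\<iota>])
      have "(\<Sum>(x, y)\<leftarrow>\<Delta> h. act x e * act y k - act x d * c (act y k))
          = (\<Sum>(x, y)\<leftarrow>\<Delta> h. act x e * act y k) - (\<Sum>(x, y)\<leftarrow>\<Delta> h. act x d * act y (c k))"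
        by (simp only: c_act[OF that] split_def sum_list_subtractf)
      also have "\<dots> = act h (e * k) - act h (d * c k)"
        by (simp only: act_product)
      finally show ?thesis using \<open>e * k = d * c k\<close> by simp
    qed
  qed
  then have "\<iota> (act h e) * \<iota> k = \<iota> (act h d) * \<iota> (c k)"
    by (metis \<iota>_mult right_minus_eq)
  also have "\<dots> = q * \<iota> (act h d) * \<iota> k"
    using c[OF k] extended_center_commute[OF center, of "\<iota> (act h d)"] by (metis mult.assoc)
  finally show ?thesis .
qed

lemma QH_if_H_equivariant_on:
  assumes center: "q \<in> extended_center" and eqv: "H_equivariant_on q J"
  shows "q \<in> QH act \<iota>"
proof -
  have shift: "\<iota> (act h e) = q * \<iota> (act h d)" if "\<iota> e = q * \<iota> d" for d e h
  proof -
    have "(\<iota> (act h e) - q * \<iota> (act h d)) * \<iota> k = 0" if "k \<in> J" for k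
      using H_equivariant_on_act_mult[OF center eqv \<open>\<iota> e = q * \<iota> d\<close> that]
      by (simp add: left_diff_distrib)
    then show ?thesis
      using dense_ideals_annihilate_eq_0[OF H_equivariant_onD(1)[OF eqv]] by (metis right_minus_eq)
  qed
  show ?thesis
    unfolding QH_def
  proof (intro CollectI allI ballI conjI impI)
    fix h d e
    show "\<iota> (act h e) = q * \<iota> (act h d)" if "\<iota> e = q * \<iota> d" using shift[OF that] .
    show "\<iota> (act h e) = \<iota> (act h d) * q" if "\<iota> e = \<iota> d * q"
      using shift[of e d h] that extended_center_commute[OF center] by metis
  qed
qed

lemma extended_H_center_iff:
  "q \<in> extended_H_center act \<iota> \<longleftrightarrow> q \<in> extended_center \<and> (\<exists>J. H_equivariant_on q J)"
  using QH_if_H_equivariant_on H_equivariant_on_D_set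
  unfolding extended_H_center_def by blast

lemma extended_H_center_zero: "0 \<in> extended_H_center act \<iota>"
proof -
  have "H_equivariant_on 0 UNIV"
    unfolding H_equivariant_on_def using UNIV_dense_ideals H_ideal_UNIV
    by (auto intro!: exI[of _ "0 :: 'a"])
  then show ?thesis unfolding extended_H_center_iff extended_center_def by auto
qed

lemma extended_H_center_one: "1 \<in> extended_H_center act \<iota>"
proof -
  have "H_equivariant_on 1 UNIV"
    unfolding H_equivariant_on_def using UNIV_dense_ideals H_ideal_UNIV by auto
  then show ?thesis unfolding extended_H_center_iff extended_center_def by auto
qed

lemma extended_H_center_uminus:
  assumes q: "q \<in> extended_H_center act \<iota>"
  shows "- q \<in> extended_H_center act \<iota>"
proof -
  have "- q \<in> extended_center"
    using extended_H_center_imp_extended_center[OF q] by (simp add: extended_center_def)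
  moreover have "H_equivariant_on (- q) (D_set \<iota> q)"
    unfolding H_equivariant_on_def
  proof (intro conjI ballI)
    note eqv = H_equivariant_onD[OF H_equivariant_on_D_set[OF q]]
    show "D_set \<iota> q \<in> dense_ideals" and "H_ideal act (D_set \<iota> q)" using eqv by blast+
    fix k assume "k \<in> D_set \<iota> q"
    then obtain b where "\<iota> b = q * \<iota> k" "\<forall>h. \<iota> (act h b) = q * \<iota> (act h k)"
      using eqv(3) by blast
    then show "\<exists>b. \<iota> b = - q * \<iota> k \<and> (\<forall>h. \<iota> (act h b) = - q * \<iota> (act h k))"
      by (intro exI[of _ "- b"]) simp
  qed
  ultimately show ?thesis unfolding extended_H_center_iff by blast
qed

lemma extended_H_center_add:
  assumes q1: "q1 \<in> extended_H_center act \<iota>" and q2: "q2 \<in> extended_H_center act \<iota>"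
  shows "q1 + q2 \<in> extended_H_center act \<iota>"
proof -
  have "q1 + q2 \<in> extended_center"
    using extended_H_center_imp_extended_center[OF q1] extended_H_center_imp_extended_center[OF q2]
    by (simp add: extended_center_def algebra_simps)
  moreover have "H_equivariant_on (q1 + q2) (D_set \<iota> q1 \<inter> D_set \<iota> q2)"
    unfolding H_equivariant_on_def
  proof (intro conjI ballI)
    note eqv1 = H_equivariant_onD[OF H_equivariant_on_D_set[OF q1]]
      and eqv2 = H_equivariant_onD[OF H_equivariant_on_D_set[OF q2]]
    show "D_set \<iota> q1 \<inter> D_set \<iota> q2 \<in> dense_ideals"
      using dense_ideals_Int eqv1(1) eqv2(1) by blast
    show "H_ideal act (D_set \<iota> q1 \<inter> D_set \<iota> q2)"
      using H_ideal_Int eqv1(2) eqv2(2) by blast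
    fix k assume "k \<in> D_set \<iota> q1 \<inter> D_set \<iota> q2"
    then obtain b1 b2 where "\<iota> b1 = q1 * \<iota> k" "\<forall>h. \<iota> (act h b1) = q1 * \<iota> (act h k)"
      and "\<iota> b2 = q2 * \<iota> k" "\<forall>h. \<iota> (act h b2) = q2 * \<iota> (act h k)"
      using eqv1(3) eqv2(3) by blast
    then show "\<exists>b. \<iota> b = (q1 + q2) * \<iota> k \<and> (\<forall>h. \<iota> (act h b) = (q1 + q2) * \<iota> (act h k))"
      by (intro exI[of _ "b1 + b2"]) (simp add: distrib_right)
  qed
  ultimately show ?thesis unfolding extended_H_center_iff by blast
qed

lemma extended_H_center_vimage_dense_H_ideal:
  assumes q: "q \<in> extended_H_center act \<iota>" and D: "D \<in> dense_ideals" and HD: "H_ideal act D"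
  shows "D_set \<iota> q \<inter> {k. q * \<iota> k \<in> \<iota> ` D} \<in> dense_ideals"
    and "H_ideal act (D_set \<iota> q \<inter> {k. q * \<iota> k \<in> \<iota> ` D})"
proof -
  let ?J = "D_set \<iota> q \<inter> {k. q * \<iota> k \<in> \<iota> ` D}"
  note center = extended_H_center_imp_extended_center[OF q]
  note eqv = H_equivariant_onD[OF H_equivariant_on_D_set[OF q]]
  have J: "ring_ideal ?J"
    by (intro ring_ideal_Int ring_ideal_extended_center_vimage[OF center]
        dense_ideals_ring_ideal D eqv(1))
  show "?J \<in> dense_ideals"
  proof (rule dense_ideals_products[OF D eqv(1) J])
    fix i j assume i: "i \<in> D" and j: "j \<in> D_set \<iota> q"
    obtain b where b: "\<iota> b = q * \<iota> j" using eqv(3)[OF j] by blast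
    have "q * \<iota> (i * j) = \<iota> (i * b)"
      using b extended_center_commute[OF center, of "\<iota> i"] by (metis \<iota>_mult mult.assoc)
    moreover have "i * b \<in> D" and "i * j \<in> D_set \<iota> q"
      using ring_ideal_mult_right[OF dense_ideals_ring_ideal[OF D] i]
        ring_ideal_mult_left[OF dense_ideals_ring_ideal[OF eqv(1)] j] by blast+
    ultimately show "i * j \<in> ?J" by blast
  qed
  show "H_ideal act ?J"
    unfolding H_ideal_def
  proof (intro conjI allI ballI J)
    fix h k assume "k \<in> ?J"
    then obtain b where "k \<in> D_set \<iota> q" "b \<in> D" "\<iota> b = q * \<iota> k" by (auto simp: image_iff)
    then have "act h k \<in> D_set \<iota> q" "act h b \<in> D" "\<iota> (act h b) = q * \<iota> (act h k)"
      using HD eqv(2) extended_H_center_act[OF q] unfolding H_ideal_def by blast+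
    then show "act h k \<in> ?J" by (metis (mono_tags, lifting) IntI mem_Collect_eq rev_image_eqI)
  qed
qed

lemma extended_H_center_mult:
  assumes q1: "q1 \<in> extended_H_center act \<iota>" and q2: "q2 \<in> extended_H_center act \<iota>"
  shows "q1 * q2 \<in> extended_H_center act \<iota>"
proof -
  note eqv1 = H_equivariant_onD[OF H_equivariant_on_D_set[OF q1]]
  define J where "J = D_set \<iota> q2 \<inter> {k. q2 * \<iota> k \<in> \<iota> ` D_set \<iota> q1}"
  have "q1 * q2 * p = p * (q1 * q2)" for p
  proof -
    have "q1 * q2 * p = q1 * (p * q2)"
      using extended_center_commute[OF extended_H_center_imp_extended_center[OF q2], of p]
      by (simp add: mult.assoc)
    also have "\<dots> = p * (q1 * q2)"
      using extended_center_commute[OF extended_H_center_imp_extended_center[OF q1], of p]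
      by (metis mult.assoc)
    finally show ?thesis .
  qed
  then have "q1 * q2 \<in> extended_center" unfolding extended_center_def by blast
  moreover have "H_equivariant_on (q1 * q2) J"
    unfolding H_equivariant_on_def J_def
  proof (intro conjI ballI extended_H_center_vimage_dense_H_ideal[OF q2 eqv1(1,2)])
    fix k assume "k \<in> D_set \<iota> q2 \<inter> {k. q2 * \<iota> k \<in> \<iota> ` D_set \<iota> q1}"
    then obtain b where "b \<in> D_set \<iota> q1" and b: "\<iota> b = q2 * \<iota> k" by (auto simp: image_iff)
    then obtain b1 where "\<iota> b1 = q1 * \<iota> b" "\<forall>h. \<iota> (act h b1) = q1 * \<iota> (act h b)"
      using eqv1(3) by blast
    then show "\<exists>b. \<iota> b = q1 * q2 * \<iota> k \<and> (\<forall>h. \<iota> (act h b) = q1 * q2 * \<iota> (act h k))"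
      using b extended_H_center_act[OF q2 b] by (intro exI[of _ b1]) (simp add: mult.assoc)
  qed
  ultimately show ?thesis unfolding extended_H_center_iff by blast
qed

lemma cring_extended_H_center: "cring (subring_struct (extended_H_center act \<iota>))"
proof (rule cring_subring_struct)
  fix x y assume x: "x \<in> extended_H_center act \<iota>" and y: "y \<in> extended_H_center act \<iota>"
  show "x + y \<in> extended_H_center act \<iota>" by (rule extended_H_center_add[OF x y])
  show "x * y \<in> extended_H_center act \<iota>" by (rule extended_H_center_mult[OF x y])
  show "x * y = y * x"
    by (rule extended_center_commute[OF extended_H_center_imp_extended_center[OF x]])
qed (simp_all add: extended_H_center_zero extended_H_center_one extended_H_center_uminus)

lemma H_ideal_extended_H_center_image:
  assumes q: "q \<in> extended_H_center act \<iota>"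
  shows "H_ideal act {b. \<iota> b \<in> range (\<lambda>a. q * \<iota> a)}"
  unfolding H_ideal_def
proof (intro conjI allI ballI)
  show "ring_ideal {b. \<iota> b \<in> range (\<lambda>a. q * \<iota> a)}"
    by (rule ring_ideal_extended_center_image[OF extended_H_center_imp_extended_center[OF q]
          ring_ideal_UNIV])
  fix h b assume "b \<in> {b. \<iota> b \<in> range (\<lambda>a. q * \<iota> a)}"
  then obtain d where "\<iota> b = q * \<iota> d" by blast
  then show "act h b \<in> {b. \<iota> b \<in> range (\<lambda>a. q * \<iota> a)}"
    using extended_H_center_act[OF q] by blast
qed

lemma H_ideal_extended_H_center_kernel:
  assumes q: "q \<in> extended_H_center act \<iota>"
  shows "H_ideal act {a. q * \<iota> a = 0}"
  unfolding H_ideal_def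
proof (intro conjI allI ballI)
  have "ring_ideal {0 :: 'a}" by (simp add: ring_ideal_def)
  then have "ring_ideal {a. q * \<iota> a \<in> \<iota> ` {0}}"
    by (rule ring_ideal_extended_center_vimage[OF extended_H_center_imp_extended_center[OF q]])
  then show "ring_ideal {a. q * \<iota> a = 0}" by simp
  fix h a assume "a \<in> {a. q * \<iota> a = 0}"
  then show "act h a \<in> {a. q * \<iota> a = 0}"
    using extended_H_center_act[OF q, of 0 a h] by simp
qed

lemma H_prime_extended_H_center_mult_eq_0:
  assumes hp: "H_prime act" and q: "q \<in> extended_H_center act \<iota>" and "q \<noteq> 0"
    and d: "q * \<iota> d = 0"
  shows "d = 0"
proof -
  let ?K = "{b. \<iota> b \<in> range (\<lambda>a. q * \<iota> a)}" and ?L = "{a. q * \<iota> a = 0}"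
  note center = extended_H_center_imp_extended_center[OF q]
  have "?K \<noteq> {0}"
  proof
    assume K: "?K = {0}"
    have "q * \<iota> a = 0" if a: "a \<in> D_set \<iota> q" for a
    proof -
      obtain b where b: "q * \<iota> a = \<iota> b"
        using a unfolding D_set_extended_center[OF center] by blast
      then have "b \<in> ?K" by (metis (mono_tags, lifting) mem_Collect_eq rangeI)
      then show ?thesis using K b by simp
    qed
    then show False using dense_ideals_annihilate_eq_0[OF D_set_dense[OF center]] \<open>q \<noteq> 0\<close> by blast
  qed
  moreover have "ideal_prod ?K ?L = {0}"
    unfolding ideal_prod_eq_zero_iff
  proof (intro ballI)
    fix x y assume "x \<in> ?K" "y \<in> ?L"
    then obtain a where "\<iota> x = q * \<iota> a" and "q * \<iota> y = 0" by auto
    then have "\<iota> (x * y) = 0"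
      using extended_center_commute[OF center, of "\<iota> a"] by (metis \<iota>_mult mult.assoc mult_zero_right)
    then show "x * y = 0" by (simp only: \<iota>_eq_0_iff)
  qed
  ultimately have "?L = {0}"
    using hp H_ideal_extended_H_center_image[OF q] H_ideal_extended_H_center_kernel[OF q]
    unfolding H_prime_def by blast
  then show ?thesis using d by blast
qed

lemma H_prime_dense_extended_H_center_image:
  assumes hp: "H_prime act" and q: "q \<in> extended_H_center act \<iota>" and "q \<noteq> 0"
  shows "{b. \<iota> b \<in> range (\<lambda>a. q * \<iota> a)} \<in> dense_ideals"
proof -
  let ?K = "{b. \<iota> b \<in> range (\<lambda>a. q * \<iota> a)}"
  note center = extended_H_center_imp_extended_center[OF q]
  note kernel_trivial = H_prime_extended_H_center_mult_eq_0[OF hp q \<open>q \<noteq> 0\<close>]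
  have lift: "\<exists>b\<in>?K. \<iota> b = q * \<iota> d" if "d \<in> D_set \<iota> q" for d
    using that unfolding D_set_extended_center[OF center] by (metis mem_Collect_eq rangeE rangeI)
  have D: "D_set \<iota> q \<in> dense_ideals" by (rule D_set_dense[OF center])
  show ?thesis
  proof (rule dense_idealsI)
    show "ring_ideal ?K"
      using H_ideal_extended_H_center_image[OF q] unfolding H_ideal_def by (rule conjunct1)
  next
    fix x assume ann: "\<And>b. b \<in> ?K \<Longrightarrow> x * b = 0"
    have "x * d = 0" if d: "d \<in> D_set \<iota> q" for d
    proof (rule kernel_trivial)
      obtain b where "b \<in> ?K" and b: "\<iota> b = q * \<iota> d" using lift[OF d] by blast
      have "q * \<iota> (x * d) = \<iota> (x * b)"
        using b extended_center_commute[OF center, of "\<iota> x"] by (simp add: mult.assoc[symmetric])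
      then show "q * \<iota> (x * d) = 0" using ann[OF \<open>b \<in> ?K\<close>] by simp
    qed
    then show "x = 0" using dense_ideals_left_annihilator[OF D] by blast
  next
    fix x assume ann: "\<And>b. b \<in> ?K \<Longrightarrow> b * x = 0"
    have "d * x = 0" if d: "d \<in> D_set \<iota> q" for d
    proof (rule kernel_trivial)
      obtain b where "b \<in> ?K" and b: "\<iota> b = q * \<iota> d" using lift[OF d] by blast
      have "q * \<iota> (d * x) = \<iota> (b * x)" using b by (simp add: mult.assoc)
      then show "q * \<iota> (d * x) = 0" using ann[OF \<open>b \<in> ?K\<close>] by simp
    qed
    then show "x = 0" using dense_ideals_right_annihilator[OF D] by blast
  qed
qed

lemma H_prime_extended_H_center_divide:
  assumes hp: "H_prime act" and q: "q \<in> extended_H_center act \<iota>" and "q \<noteq> 0"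
  obtains p where "p \<in> extended_center" and "\<And>b d. \<iota> b = q * \<iota> d \<Longrightarrow> p * \<iota> b = \<iota> d"
proof -
  let ?K = "{b. \<iota> b \<in> range (\<lambda>a. q * \<iota> a)}"
  note center = extended_H_center_imp_extended_center[OF q]
  have cancel: "d = d'" if "q * \<iota> d = q * \<iota> d'" for d d'
    using H_prime_extended_H_center_mult_eq_0[OF hp q \<open>q \<noteq> 0\<close>, of "d - d'"] that
    by (simp add: right_diff_distrib)
  define \<phi> where "\<phi> b = (THE d. \<iota> b = q * \<iota> d)" for b
  have \<phi>_eq: "\<phi> b = d" if b: "\<iota> b = q * \<iota> d" for b d
    unfolding \<phi>_def
  proof (rule the_equality)
    show "\<iota> b = q * \<iota> d" by (fact b)
    show "d' = d" if "\<iota> b = q * \<iota> d'" for d' using cancel b that by metis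
  qed
  have \<phi>: "\<iota> b = q * \<iota> (\<phi> b)" if "b \<in> ?K" for b
    using that \<phi>_eq by blast
  have "?K \<in> dense_ideals" by (rule H_prime_dense_extended_H_center_image[OF hp q \<open>q \<noteq> 0\<close>])
  moreover have "\<phi> (x + y) = \<phi> x + \<phi> y" if "x \<in> ?K" "y \<in> ?K" for x y
    using \<phi>[OF that(1)] \<phi>[OF that(2)] by (intro \<phi>_eq) (simp add: distrib_left)
  moreover have "\<phi> (x * r) = \<phi> x * r" if "x \<in> ?K" for x r
    using \<phi>[OF that] by (intro \<phi>_eq) (simp add: mult.assoc)
  moreover have "\<phi> (r * x) = r * \<phi> x" if "x \<in> ?K" for x r
    using \<phi>[OF that] extended_center_commute[OF center, of "\<iota> r"]
    by (intro \<phi>_eq) (metis \<iota>_mult mult.assoc)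
  ultimately have "\<exists>p\<in>extended_center. \<forall>b\<in>?K. p * \<iota> b = \<iota> (\<phi> b)"
    by (rule bimodule_map_extended_center)
  then obtain p where "p \<in> extended_center" and p: "\<And>b. b \<in> ?K \<Longrightarrow> p * \<iota> b = \<iota> (\<phi> b)"
    by blast
  moreover have "p * \<iota> b = \<iota> d" if "\<iota> b = q * \<iota> d" for b d
    using p[of b] \<phi>_eq[OF that] that by blast
  ultimately show ?thesis using that by blast
qed

lemma H_prime_extended_H_center_inverse:
  assumes hp: "H_prime act" and q: "q \<in> extended_H_center act \<iota>" and "q \<noteq> 0"
  shows "\<exists>p\<in>extended_H_center act \<iota>. q * p = 1"
proof -
  note center = extended_H_center_imp_extended_center[OF q]
  obtain p where p_center: "p \<in> extended_center" and p: "\<And>b d. \<iota> b = q * \<iota> d \<Longrightarrow> p * \<iota> b = \<iota> d"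
    using H_prime_extended_H_center_divide[OF hp q \<open>q \<noteq> 0\<close>] by blast
  have "p * q * \<iota> d = \<iota> d" if d: "d \<in> D_set \<iota> q" for d
  proof -
    obtain b where "\<iota> b = q * \<iota> d"
      using d unfolding D_set_extended_center[OF center] by (metis mem_Collect_eq rangeE)
    then show ?thesis using p by (metis mult.assoc)
  qed
  then have "p * q = 1"
    using dense_ideals_annihilate_eq_0[OF D_set_dense[OF center], of "p * q - 1"]
    by (simp add: left_diff_distrib)
  then have "q * p = 1" using extended_center_commute[OF p_center] by simp
  moreover have "H_equivariant_on p {b. \<iota> b \<in> range (\<lambda>a. q * \<iota> a)}"
    unfolding H_equivariant_on_def
  proof (intro conjI ballI H_prime_dense_extended_H_center_image[OF hp q \<open>q \<noteq> 0\<close>]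
      H_ideal_extended_H_center_image[OF q])
    fix k assume "k \<in> {b. \<iota> b \<in> range (\<lambda>a. q * \<iota> a)}"
    then obtain d where d: "\<iota> k = q * \<iota> d" by blast
    show "\<exists>b. \<iota> b = p * \<iota> k \<and> (\<forall>h. \<iota> (act h b) = p * \<iota> (act h k))"
      using p[OF d] p[OF extended_H_center_act[OF q d]] by (intro exI[of _ d]) simp
  qed
  ultimately show ?thesis using p_center extended_H_center_iff by blast
qed

lemma field_extended_H_center_if_H_prime:
  assumes "H_prime act"
  shows "field (subring_struct (extended_H_center act \<iota>))"
  by (rule cring.cring_fieldI2[OF cring_extended_H_center])
    (use H_prime_extended_H_center_inverse[OF assms] in simp_all)

lemma semiprime_H_ideal_idempotent:
  assumes sp: "semiprime TYPE('a)" and HI: "H_ideal act I"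
  obtains e where "e \<in> extended_H_center act \<iota>" and "e * e = e"
    and "\<And>i. i \<in> I \<Longrightarrow> e * \<iota> i = \<iota> i" and "\<And>t. t \<in> left_annihilator I \<Longrightarrow> e * \<iota> t = 0"
proof -
  let ?T = "left_annihilator I"
  have I: "ring_ideal I" using HI unfolding H_ideal_def by blast
  have T: "ring_ideal ?T" by (rule ring_ideal_left_annihilator[OF I])
  have HT: "H_ideal act ?T" using T left_annihilator_H_stable[OF HI] unfolding H_ideal_def by blast
  have E: "I + ?T \<in> dense_ideals" by (rule semiprime_dense_set_plus_left_annihilator[OF sp I])
  obtain e where e_center: "e \<in> extended_center"
    and e: "\<And>i t. i \<in> I \<Longrightarrow> t \<in> ?T \<Longrightarrow> e * \<iota> (i + t) = \<iota> i"
    using extended_center_projection[OF I T semiprime_Int_left_annihilator[OF sp I] E] by blast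
  have e_I: "e * \<iota> i = \<iota> i" if "i \<in> I" for i
    using e[OF that ring_ideal_zero[OF T]] by simp
  have e_T: "e * \<iota> t = 0" if "t \<in> ?T" for t
    using e[OF ring_ideal_zero[OF I] that] by simp
  have "H_equivariant_on e (I + ?T)"
    unfolding H_equivariant_on_def
  proof (intro conjI ballI E H_ideal_set_plus HI HT)
    fix k assume "k \<in> I + ?T"
    then obtain i t where k: "k = i + t" and i: "i \<in> I" and t: "t \<in> ?T" by (auto elim: set_plus_elim)
    have "act h i \<in> I" "act h t \<in> ?T" for h
      using HI HT i t unfolding H_ideal_def by blast+
    then show "\<exists>b. \<iota> b = e * \<iota> k \<and> (\<forall>h. \<iota> (act h b) = e * \<iota> (act h k))"
      using e i t by (intro exI[of _ i]) (simp add: k)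
  qed
  then have "e \<in> extended_H_center act \<iota>" unfolding extended_H_center_iff using e_center by blast
  moreover have "e * e = e"
  proof -
    have "(e * e - e) * \<iota> x = 0" if x: "x \<in> I + ?T" for x
    proof -
      obtain i t where "x = i + t" "i \<in> I" "t \<in> ?T" using x by (auto elim: set_plus_elim)
      then show ?thesis using e e_I by (simp add: mult.assoc left_diff_distrib)
    qed
    then show ?thesis using dense_ideals_annihilate_eq_0[OF E] by (metis right_minus_eq)
  qed
  ultimately show ?thesis using that e_I e_T by blast
qed

lemma field_extended_H_center_idempotent:
  assumes field: "field (subring_struct (extended_H_center act \<iota>))"
    and e: "e \<in> extended_H_center act \<iota>" and idem: "e * e = e"
  shows "e = 0 \<or> e = 1"
proof -
  have "1 - e \<in> extended_H_center act \<iota>"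
    using extended_H_center_add[OF extended_H_center_one extended_H_center_uminus[OF e]] by simp
  moreover have "e * (1 - e) = 0" using idem by (simp add: right_diff_distrib)
  ultimately show ?thesis
    using domain.integral[OF field.axioms(1)[OF field], of e "1 - e"] e by simp
qed

lemma H_prime_if_field_extended_H_center:
  assumes sp: "semiprime TYPE('a)" and field: "field (subring_struct (extended_H_center act \<iota>))"
  shows "H_prime act"
  unfolding H_prime_def
proof (intro conjI allI impI)
  show "(UNIV :: 'a set) \<noteq> {0}" by (metis UNIV_I singletonD zero_neq_one)
  fix I J :: "'a set"
  assume "H_ideal act I \<and> H_ideal act J \<and> I \<noteq> {0} \<and> J \<noteq> {0}"
  then have HI: "H_ideal act I" and HJ: "H_ideal act J" and "I \<noteq> {0}" and "J \<noteq> {0}" by auto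
  have I: "ring_ideal I" and J: "ring_ideal J" using HI HJ unfolding H_ideal_def by auto
  obtain i j where "i \<in> I" "i \<noteq> 0" "j \<in> J" "j \<noteq> 0"
    using \<open>I \<noteq> {0}\<close> \<open>J \<noteq> {0}\<close> ring_ideal_zero[OF I] ring_ideal_zero[OF J] by blast
  obtain e where e: "e \<in> extended_H_center act \<iota>" "e * e = e"
    and e_I: "\<And>i. i \<in> I \<Longrightarrow> e * \<iota> i = \<iota> i" and e_T: "\<And>t. t \<in> left_annihilator I \<Longrightarrow> e * \<iota> t = 0"
    using semiprime_H_ideal_idempotent[OF sp HI] by blast
  show "ideal_prod I J \<noteq> {0}"
  proof
    assume "ideal_prod I J = {0}"
    then have "j \<in> left_annihilator I"
      using semiprime_ideal_prod_zero_imp_subset_left_annihilator[OF sp I J] \<open>j \<in> J\<close> by blast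
    then have "e \<noteq> 1" using e_T \<open>j \<noteq> 0\<close> by force
    moreover have "e \<noteq> 0" using e_I[OF \<open>i \<in> I\<close>] \<open>i \<noteq> 0\<close> by force
    ultimately show False using field_extended_H_center_idempotent[OF field e] by blast
  qed
qed

end

theorem proposition2p2:
  fixes sH :: "'k::field \<Rightarrow> 'h::ring_1 \<Rightarrow> 'h"
    and \<Delta> :: "'h \<Rightarrow> ('h \<times> 'h) list"
    and \<epsilon> :: "'h \<Rightarrow> 'k"
    and S :: "'h \<Rightarrow> 'h"
    and sA :: "'k \<Rightarrow> 'a::ring_1 \<Rightarrow> 'a"
    and act :: "'h \<Rightarrow> 'a \<Rightarrow> 'a"
    and \<iota> :: "'a \<Rightarrow> 'q::ring_1"
  assumes "hopf_algebra sH \<Delta> \<epsilon> S"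
    and "bij S"
    and "module_algebra sH \<Delta> \<epsilon> sA act"
    and "sym_ring_of_quotients \<iota>"
  shows "(H_prime act \<longrightarrow> field (subring_struct (extended_H_center act \<iota>))) \<and>
         (semiprime TYPE('a) \<and> field (subring_struct (extended_H_center act \<iota>)) \<longrightarrow> H_prime act)"
proof -
  interpret hopf_quotients sH \<Delta> \<epsilon> S sA act \<iota>
    using assms(1,3,4) by unfold_locales
  show ?thesis
    using field_extended_H_center_if_H_prime H_prime_if_field_extended_H_center by blast
qed

end
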